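(* For every $n$-vertex graph $G$ (with $n\ge 2$), there exists a graph $G'$ with fewer than $n^2$ vertices such that $G$ is an induced subgraph of $G'$ and $G'$ has sd-degeneracy at most $1$.
   Context: For a graph $G$ and distinct vertices $u,v$, let $N_G(u)$ be the open neighborhood and $\mathrm{sd}_G(u,v) := |(N_G(u)\setminus\{v\}) \triangle (N_G(v)\setminus\{u\})|$, where $\triangle$ is symmetric difference of sets. The sd-degeneracy $\mathrm{sdd}(G)$ of a graph $G$ is the smallest non-negative integer $d$ such that either $|V(G)|=1$, or there exist distinct $u,v\in V(G)$ with $\mathrm{sd}_G(u,v)\le d$ and $\mathrm{sdd}(G-v)\le d$. Equivalently, $\mathrm{sdd}(G)\le d$ iff there is an ordering $v_1,\dots,v_n$ of $V(G)$ such that for every $i\in[n-1]$ there is $j>i$ with $\mathrm{sd}_{G_i}(v_i,v_j)\le d$, where $G_i := G-\{v_k : k<i\}$. *)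

theory Defs
  imports Main
begin

definition graph :: "'a set \<Rightarrow> ('a \<times> 'a) set \<Rightarrow> bool" where
  "graph V E \<longleftrightarrow> finite V \<and> E \<subseteq> V \<times> V \<and> sym E \<and> irrefl E"

definition nbhd :: "('a \<times> 'a) set \<Rightarrow> 'a \<Rightarrow> 'a set" where
  "nbhd E u = {w. (u, w) \<in> E}"

definition sd :: "('a \<times> 'a) set \<Rightarrow> 'a \<Rightarrow> 'a \<Rightarrow> nat" where
  "sd E u v = card (((nbhd E u - {v}) - (nbhd E v - {u})) \<union> ((nbhd E v - {u}) - (nbhd E u - {v})))"

definition del_vertex :: "'a set \<Rightarrow> ('a \<times> 'a) set \<Rightarrow> 'a \<Rightarrow> ('a set \<times> ('a \<times> 'a) set)" where
  "del_vertex V E v = (V - {v}, E \<inter> ((V - {v}) \<times> (V - {v})))"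

inductive sdd_le :: "nat \<Rightarrow> 'a set \<Rightarrow> ('a \<times> 'a) set \<Rightarrow> bool" where
  single: "card V = 1 \<Longrightarrow> sdd_le d V E"
| step: "\<lbrakk>u \<in> V; v \<in> V; u \<noteq> v; sd E u v \<le> d;
          sdd_le d (V - {v}) (E \<inter> ((V - {v}) \<times> (V - {v})))\<rbrakk> \<Longrightarrow> sdd_le d V E"

definition sdd :: "'a set \<Rightarrow> ('a \<times> 'a) set \<Rightarrow> nat" where
  "sdd V E = (LEAST d. sdd_le d V E)"

definition induced_subgraph_of ::
  "'a set \<Rightarrow> ('a \<times> 'a) set \<Rightarrow> 'b set \<Rightarrow> ('b \<times> 'b) set \<Rightarrow> bool" where
  "induced_subgraph_of V E V' E' \<longleftrightarrow>
     (\<exists>f. inj_on f V \<and> f ` V \<subseteq> V' \<and>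
          (\<forall>x\<in>V. \<forall>y\<in>V. (f x, f y) \<in> E' \<longleftrightarrow> (x, y) \<in> E))"

end

theory Submission
  imports Defs "HOL-Library.Nat_Bijection"
begin

text \<open>Number the vertices 0, ..., n-1 and add, for every vertex a and every t with a < t < n,
  a truncated copy (a, t) of a, adjacent exactly to those original vertices j \<ge> t that are
  adjacent to a; the original vertex j is represented by (j, j). Deleting the vertices column by column, the copy (a, k) is, up to the single
  vertex (k, k), a twin of (a, k+1), and (k, k) itself is a twin of (k, k+1); in the last
  column all remaining copies are twins up to (n-1, n-1).\<close>

lemma sd_le_oneI:
  assumes "((nbhd E u - {v}) - (nbhd E v - {u})) \<union> ((nbhd E v - {u}) - (nbhd E u - {v})) \<subseteq> {c}"
  shows "sd E u v \<le> 1"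
proof -
  have "sd E u v \<le> card {c}" unfolding sd_def by (rule card_mono[OF _ assms]) simp
  then show ?thesis by simp
qed

abbreviation induced_edges :: "('a \<times> 'a) set \<Rightarrow> 'a set \<Rightarrow> ('a \<times> 'a) set" where
  "induced_edges E U \<equiv> E \<inter> U \<times> U"

lemma sdd_le_insert:
  assumes "sdd_le d U (induced_edges E U)" and "u \<in> U" and "v \<notin> U"
    and "sd (induced_edges E (insert v U)) u v \<le> d"
  shows "sdd_le d (insert v U) (induced_edges E (insert v U))"
proof (rule sdd_le.step)
  have "insert v U - {v} = U" using \<open>v \<notin> U\<close> by simp
  moreover have "E \<inter> insert v U \<times> insert v U \<inter> U \<times> U = E \<inter> U \<times> U" by blast
  ultimately show "sdd_le d (insert v U - {v})
      (E \<inter> insert v U \<times> insert v U \<inter> (insert v U - {v}) \<times> (insert v U - {v}))"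
    using assms(1) by simp
qed (use assms in auto)

lemma nbhd_image: "inj h \<Longrightarrow> nbhd (map_prod h h ` E) (h x) = h ` nbhd E x"
  unfolding nbhd_def inj_def by force

lemma sd_image:
  assumes "inj h"
  shows "sd (map_prod h h ` E) (h u) (h v) = sd E u v"
proof -
  let ?A = "nbhd E u" and ?B = "nbhd E v"
  have "((h ` ?A - {h v}) - (h ` ?B - {h u})) \<union> ((h ` ?B - {h u}) - (h ` ?A - {h v}))
      = h ` (((?A - {v}) - (?B - {u})) \<union> ((?B - {u}) - (?A - {v})))"
    using assms unfolding inj_def by blast
  then show ?thesis
    unfolding sd_def nbhd_image[OF assms] by (simp add: card_image inj_on_subset[OF assms])
qed

lemma sdd_le_image:
  assumes "inj h" and "sdd_le d V E" and "E \<subseteq> V \<times> V"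
  shows "sdd_le d (h ` V) (map_prod h h ` E)"
  using assms(2,3)
proof (induction rule: sdd_le.induct)
  case (single V d E)
  then show ?case by (simp add: sdd_le.single card_image inj_on_subset[OF assms(1)])
next
  case (step u V v E d)
  have "h ` V - {h v} = h ` (V - {v})" using assms(1) by (simp add: image_set_diff)
  moreover have "map_prod h h ` E \<inter> h ` (V - {v}) \<times> h ` (V - {v})
      = map_prod h h ` (E \<inter> (V - {v}) \<times> (V - {v}))"
    using step.prems assms(1) by (auto simp: inj_eq image_iff)
  ultimately have "sdd_le d (h ` V - {h v}) (map_prod h h ` E \<inter> (h ` V - {h v}) \<times> (h ` V - {h v}))"
    using step.IH by simp
  then show ?case
    using step sd_image[OF assms(1)] sdd_le.step[of "h u" "h ` V" "h v"] assms(1)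
    by (auto simp: inj_eq)
qed

lemma graph_image:
  assumes "inj h" and "graph V E"
  shows "graph (h ` V) (map_prod h h ` E)"
  using assms unfolding graph_def sym_def irrefl_def by (auto simp: inj_eq)

lemma induced_subgraph_of_image:
  assumes "inj h" and "induced_subgraph_of V E V' E'"
  shows "induced_subgraph_of V E (h ` V') (map_prod h h ` E')"
proof -
  obtain f where f: "inj_on f V" "f ` V \<subseteq> V'"
    and adj: "\<forall>x\<in>V. \<forall>y\<in>V. (f x, f y) \<in> E' \<longleftrightarrow> (x, y) \<in> E"
    using assms(2) unfolding induced_subgraph_of_def by blast
  have "inj (map_prod h h)" using assms(1) by (simp add: prod.inj_map)
  then have "\<forall>x\<in>V. \<forall>y\<in>V. ((h \<circ> f) x, (h \<circ> f) y) \<in> map_prod h h ` E' \<longleftrightarrow> (x, y) \<in> E"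
    using adj by (metis comp_apply inj_image_mem_iff map_prod_simp)
  moreover have "inj_on (h \<circ> f) V" using f(1) assms(1) by (simp add: comp_inj_on inj_on_subset)
  moreover have "(h \<circ> f) ` V \<subseteq> h ` V'" using f(2) by auto
  ultimately show ?thesis unfolding induced_subgraph_of_def by blast
qed

definition copies :: "nat \<Rightarrow> (nat \<times> nat) set" where
  "copies n = {(a, t). a \<le> t \<and> t < n}"

definition copy_edges :: "(nat \<Rightarrow> nat \<Rightarrow> bool) \<Rightarrow> nat \<Rightarrow> ((nat \<times> nat) \<times> (nat \<times> nat)) set" where
  "copy_edges A n = {((a, t), (b, s)). (a, t) \<in> copies n \<and> (b, s) \<in> copies n \<and> (a, t) \<noteq> (b, s) \<and>
     (s = b \<and> A a b \<and> t \<le> b \<or> t = a \<and> A b a \<and> s \<le> a)}"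

text \<open>The vertices still present when column k is being deleted and the copies (a, k) with
  m \<le> a < k are already gone.\<close>
definition remaining :: "nat \<Rightarrow> nat \<Rightarrow> nat \<Rightarrow> (nat \<times> nat) set" where
  "remaining n k m = {(a, t). a \<le> t \<and> t < n \<and> (k < t \<or> t = k \<and> (a = k \<or> a < m))}"

lemma finite_copies: "finite (copies n)"
  by (rule finite_subset[of _ "{..<n} \<times> {..<n}"]) (auto simp: copies_def)

lemma card_copies_less: "2 \<le> n \<Longrightarrow> card (copies n) < n^2"
proof -
  assume "2 \<le> n"
  then have "(1, 0) \<in> {..<n} \<times> {..<n} - copies n" by (simp add: copies_def)
  moreover have "copies n \<subseteq> {..<n} \<times> {..<n}" by (auto simp: copies_def)
  ultimately have "copies n \<subset> {..<n} \<times> {..<n}" by blast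
  then have "card (copies n) < card ({..<n} \<times> {..<n})" by (rule psubset_card_mono[rotated]) simp
  then show ?thesis by (simp add: power2_eq_square)
qed

lemma copy_edges_subset: "copy_edges A n \<subseteq> copies n \<times> copies n"
  unfolding copy_edges_def by auto

lemma graph_copies: "graph (copies n) (copy_edges A n)"
proof -
  have "sym (copy_edges A n)" and "irrefl (copy_edges A n)"
    unfolding copy_edges_def sym_def irrefl_def by auto
  then show ?thesis using finite_copies copy_edges_subset unfolding graph_def by blast
qed

lemma copy_edges_diagonal:
  "i < n \<Longrightarrow> j < n \<Longrightarrow>
    ((i, i), (j, j)) \<in> copy_edges A n \<longleftrightarrow> i \<noteq> j \<and> (A i j \<and> i \<le> j \<or> A j i \<and> j \<le> i)"
  unfolding copy_edges_def copies_def by auto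

lemma induced_subgraph_of_copies:
  assumes "graph V E"
  shows "\<exists>A. induced_subgraph_of V E (copies (card V)) (copy_edges A (card V))"
proof -
  obtain g where g: "bij_betw g V {0..<card V}"
    using assms ex_bij_betw_finite_nat unfolding graph_def by blast
  define A where "A i j \<longleftrightarrow> (\<exists>x\<in>V. \<exists>y\<in>V. g x = i \<and> g y = j \<and> (x, y) \<in> E)" for i j
  have inj: "inj_on g V" and range: "\<And>x. x \<in> V \<Longrightarrow> g x < card V"
    using g by (auto simp: bij_betw_def)
  have A: "A (g x) (g y) \<longleftrightarrow> (x, y) \<in> E" if "x \<in> V" "y \<in> V" for x y
    using that inj unfolding A_def inj_on_def by blast
  have "((g x, g x), (g y, g y)) \<in> copy_edges A (card V) \<longleftrightarrow> (x, y) \<in> E"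
    if "x \<in> V" "y \<in> V" for x y
  proof -
    have "g x = g y \<longleftrightarrow> x = y" using inj that unfolding inj_on_def by blast
    moreover have "(x, y) \<in> E \<longleftrightarrow> (y, x) \<in> E" and "(x, x) \<notin> E"
      using assms unfolding graph_def sym_def irrefl_def by blast+
    ultimately show ?thesis
      unfolding copy_edges_diagonal[OF range[OF that(1)] range[OF that(2)]] A[OF that] A[OF that(2,1)]
      by auto
  qed
  moreover have "inj_on (\<lambda>x. (g x, g x)) V" using inj by (auto simp: inj_on_def)
  moreover have "(\<lambda>x. (g x, g x)) ` V \<subseteq> copies (card V)" using range by (auto simp: copies_def)
  ultimately show ?thesis unfolding induced_subgraph_of_def by blast
qed

lemma copies_eq_remaining: "copies n = remaining n 0 0"
  unfolding copies_def remaining_def by auto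

lemma remaining_last_column: "Suc k = n \<Longrightarrow> remaining n k 0 = {(k, k)}"
  unfolding remaining_def by auto

lemma remaining_Suc_copy:
  "m < k \<Longrightarrow> k < n \<Longrightarrow> remaining n k (Suc m) = insert (m, k) (remaining n k m)"
  unfolding remaining_def by auto

lemma remaining_Suc_column:
  "Suc k < n \<Longrightarrow> remaining n k 0 = insert (k, k) (remaining n (Suc k) (Suc k))"
  unfolding remaining_def by auto

lemma remaining_subset_copies: "remaining n k m \<subseteq> copies n"
  unfolding remaining_def copies_def by auto

lemma nbhd_copy_edges_off_diagonal:
  assumes "U \<subseteq> copies n" and "(a, t) \<in> U" and "a < t"
  shows "nbhd (induced_edges (copy_edges A n) U) (a, t) = {(j, j) | j. (j, j) \<in> U \<and> t \<le> j \<and> A a j}"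
  using assms unfolding nbhd_def copy_edges_def copies_def by auto

lemma sd_copy_shift:
  assumes "U \<subseteq> copies n" and "(a, k) \<in> U" and "(a, Suc k) \<in> U" and "a < k"
  shows "sd (induced_edges (copy_edges A n) U) (a, Suc k) (a, k) \<le> 1"
  by (rule sd_le_oneI[where c = "(k, k)"])
    (use assms in \<open>auto simp: nbhd_copy_edges_off_diagonal\<close>)

lemma sd_diagonal_shift:
  assumes "Suc k < n"
  shows "sd (induced_edges (copy_edges A n) (remaining n k 0)) (k, Suc k) (k, k) \<le> 1"
  by (rule sd_le_oneI[where c = "(k, k)"])
    (use assms in \<open>auto simp: nbhd_def copy_edges_def copies_def remaining_def\<close>)

lemma sd_last_column:
  assumes "Suc k = n" and "m < k"
  shows "sd (induced_edges (copy_edges A n) (remaining n k (Suc m)))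
    (if m = 0 then (k, k) else (0, k)) (m, k) \<le> 1"
  by (rule sd_le_oneI[where c = "(k, k)"])
    (use assms in \<open>auto simp: nbhd_def copy_edges_def copies_def remaining_def\<close>)

lemma sdd_le_column:
  assumes "k < n" and "m \<le> k"
    and "sdd_le 1 (remaining n k 0) (induced_edges (copy_edges A n) (remaining n k 0))"
  shows "sdd_le 1 (remaining n k m) (induced_edges (copy_edges A n) (remaining n k m))"
  using assms(2)
proof (induction m)
  case 0
  show ?case by (rule assms(3))
next
  case (Suc m)
  let ?U = "insert (m, k) (remaining n k m)"
  define u where "u = (if Suc k < n then (m, Suc k) else if m = 0 then (k, k) else (0, k))"
  have u: "u \<in> remaining n k m" using Suc.prems assms(1) by (auto simp: u_def remaining_def)
  have "sd (induced_edges (copy_edges A n) ?U) u (m, k) \<le> 1"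
  proof (cases "Suc k < n")
    case True
    have "?U \<subseteq> copies n" using Suc.prems assms(1) remaining_subset_copies
      by (auto simp: copies_def)
    then show ?thesis
      using sd_copy_shift[of ?U n m k A] u True Suc.prems by (simp add: u_def)
  next
    case False
    then show ?thesis
      using sd_last_column[of k n m A] Suc.prems assms(1) by (simp add: u_def remaining_Suc_copy)
  qed
  moreover have "m < k" using Suc.prems by simp
  moreover have "(m, k) \<notin> remaining n k m" using \<open>m < k\<close> by (simp add: remaining_def)
  moreover have "sdd_le 1 (remaining n k m) (induced_edges (copy_edges A n) (remaining n k m))"
    using Suc.IH \<open>m < k\<close> by simp
  ultimately show ?case
    using sdd_le_insert[OF _ u] assms(1) by (simp add: remaining_Suc_copy)
qed

lemma sdd_le_remaining_diagonal:
  assumes "k < n"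
  shows "sdd_le 1 (remaining n k k) (induced_edges (copy_edges A n) (remaining n k k))"
proof -
  have "k \<le> n - 1" using assms by simp
  then show ?thesis
  proof (induction k rule: inc_induct)
    case base
    have "sdd_le 1 (remaining n (n - 1) 0) (induced_edges (copy_edges A n) (remaining n (n - 1) 0))"
      using assms by (intro sdd_le.single) (simp add: remaining_last_column)
    then show ?case using sdd_le_column[of "n - 1" n "n - 1" A] assms by simp
  next
    case (step k)
    then have "Suc k < n" by simp
    have "(k, Suc k) \<in> remaining n (Suc k) (Suc k)" and "(k, k) \<notin> remaining n (Suc k) (Suc k)"
      using \<open>Suc k < n\<close> by (auto simp: remaining_def)
    then have "sdd_le 1 (remaining n k 0) (induced_edges (copy_edges A n) (remaining n k 0))"
      using sdd_le_insert[OF step.IH] sd_diagonal_shift[OF \<open>Suc k < n\<close>]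
      by (simp add: remaining_Suc_column[OF \<open>Suc k < n\<close>])
    then show ?case using sdd_le_column[of k n k A] \<open>Suc k < n\<close> by simp
  qed
qed

lemma sdd_le_copies:
  assumes "0 < n"
  shows "sdd_le 1 (copies n) (copy_edges A n)"
proof -
  have "induced_edges (copy_edges A n) (copies n) = copy_edges A n"
    using copy_edges_subset by blast
  then show ?thesis
    using sdd_le_remaining_diagonal[OF assms, of A] by (simp add: copies_eq_remaining)
qed

theorem proposition1p1:
  fixes V :: "'a set" and E :: "('a \<times> 'a) set"
  assumes "graph V E" and "card V \<ge> 2"
  shows "\<exists>(V' :: nat set) E'. graph V' E' \<and> card V' < (card V)^2 \<and>
           induced_subgraph_of V E V' E' \<and> sdd V' E' \<le> 1"
proof -
  let ?n = "card V"
  obtain A where embed: "induced_subgraph_of V E (copies ?n) (copy_edges A ?n)"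
    using induced_subgraph_of_copies[OF assms(1)] by blast
  let ?V' = "prod_encode ` copies ?n" and ?E' = "map_prod prod_encode prod_encode ` copy_edges A ?n"
  have "graph ?V' ?E'" by (rule graph_image[OF inj_prod_encode graph_copies])
  moreover have "card ?V' < ?n^2"
    using card_copies_less[OF assms(2)] card_image[OF inj_on_subset[OF inj_prod_encode subset_UNIV]]
    by simp
  moreover have "induced_subgraph_of V E ?V' ?E'"
    by (rule induced_subgraph_of_image[OF inj_prod_encode embed])
  moreover have "sdd ?V' ?E' \<le> 1"
  proof -
    have "0 < ?n" using assms(2) by simp
    then have "sdd_le 1 ?V' ?E'"
      by (intro sdd_le_image inj_prod_encode sdd_le_copies copy_edges_subset)
    then show ?thesis unfolding sdd_def by (rule Least_le)
  qed
  ultimately show ?thesis by (intro exI conjI)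
qed

end
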